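(* Let $\Omega\subset\mathbb{R}^N$ be a bounded domain and $j\in\{1,\dots,N\}$. There exist constants $\mu>0$ depending only on $\Omega$ and $C>0$ independent of $\varepsilon$ such that for every $0<\varepsilon<1$, every $x_0\in\Omega$ and every $t>0$: for any strategies $S_I,S_{II}$ of the parabolic game started at $(x_0,t)$, \[ \mathbb{P}^{x_0,t}_{S_I,S_{II}}[t_\tau\le0]\le Ce^{-\mu t}, \] and for any strategies $\tilde S_I,\tilde S_{II}$ of the elliptic game started at $x_0$, \[ \mathbb{P}^{x_0}_{\tilde S_I,\tilde S_{II}}\Big[\tfrac{\varepsilon^2\tau}{2}\ge t\Big]\le Ce^{-\mu t}, \] where $\tau$ denotes the number of steps until the respective game ends.
   Context: Parabolic game (step size $\varepsilon$): a token at $(x_k,t_k)$, $x_k\in\Omega$, $t_k>0$; Player I chooses a $j$-dimensional linear subspace $S\subset\mathbb{R}^N$, Player II chooses a unit vector $v\in S$, and the token moves to $(x_k+\varepsilon v,t_k-\varepsilon^2/2)$ or $(x_k-\varepsilon v,t_k-\varepsilon^2/2)$ with probability $1/2$ each; the game ends at the first step $\tau$ at which $x_\tau\notin\Omega$ or $t_\tau\le0$. Elliptic game: the same dynamics on positions only ($x_{k+1}=x_k\pm\varepsilon v$ with probability $1/2$ each), ending at the first step $\tau$ with $x_\tau\notin\Omega$, with no time constraint. Strategies are measurable functions of the history of positions (and, for Player II, of the current subspace $S$); $\mathbb{P}$ denotes the induced probability on game sequences. *)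

theory Defs
  imports "HOL-Probability.Probability"
begin

text \<open>Probability space of the fair coin flips driving the game: coordinate k decides
  whether the token moves by +eps v (True) or -eps v (False) at step k.\<close>
definition coin_space :: "(nat \<Rightarrow> bool) measure" where
  "coin_space = PiM UNIV (\<lambda>_. measure_pmf (bernoulli_pmf (1/2)))"

definition strategy_I :: "nat \<Rightarrow> ('h list \<Rightarrow> 'a::euclidean_space set) \<Rightarrow> bool" where
  "strategy_I j SI \<longleftrightarrow> (\<forall>h. subspace (SI h) \<and> dim (SI h) = j)"

definition strategy_II :: "nat \<Rightarrow> ('h list \<Rightarrow> 'a::euclidean_space set \<Rightarrow> 'a) \<Rightarrow> bool" where
  "strategy_II j SII \<longleftrightarrow>
     (\<forall>h S. subspace S \<and> dim S = j \<longrightarrow> SII h S \<in> S \<and> norm (SII h S) = 1)"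

fun ell_hist :: "real \<Rightarrow> 'a::euclidean_space \<Rightarrow> ('a list \<Rightarrow> 'a set) \<Rightarrow>
    ('a list \<Rightarrow> 'a set \<Rightarrow> 'a) \<Rightarrow> (nat \<Rightarrow> bool) \<Rightarrow> nat \<Rightarrow> 'a list" where
  "ell_hist \<epsilon> x0 SI SII \<omega> 0 = [x0]"
| "ell_hist \<epsilon> x0 SI SII \<omega> (Suc k) =
     (let h = ell_hist \<epsilon> x0 SI SII \<omega> k
      in h @ [last h + (if \<omega> k then \<epsilon> else - \<epsilon>) *\<^sub>R SII h (SI h)])"

definition ell_pos :: "real \<Rightarrow> 'a::euclidean_space \<Rightarrow> ('a list \<Rightarrow> 'a set) \<Rightarrow>
    ('a list \<Rightarrow> 'a set \<Rightarrow> 'a) \<Rightarrow> (nat \<Rightarrow> bool) \<Rightarrow> nat \<Rightarrow> 'a" where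
  "ell_pos \<epsilon> x0 SI SII \<omega> k = last (ell_hist \<epsilon> x0 SI SII \<omega> k)"

definition ell_tau :: "'a set \<Rightarrow> real \<Rightarrow> 'a::euclidean_space \<Rightarrow> ('a list \<Rightarrow> 'a set) \<Rightarrow>
    ('a list \<Rightarrow> 'a set \<Rightarrow> 'a) \<Rightarrow> (nat \<Rightarrow> bool) \<Rightarrow> enat" where
  "ell_tau \<Omega> \<epsilon> x0 SI SII \<omega> =
     (if \<exists>k. ell_pos \<epsilon> x0 SI SII \<omega> k \<notin> \<Omega>
      then enat (LEAST k. ell_pos \<epsilon> x0 SI SII \<omega> k \<notin> \<Omega>) else \<infinity>)"

fun par_hist :: "real \<Rightarrow> 'a::euclidean_space \<Rightarrow> real \<Rightarrow> (('a \<times> real) list \<Rightarrow> 'a set) \<Rightarrow>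
    (('a \<times> real) list \<Rightarrow> 'a set \<Rightarrow> 'a) \<Rightarrow> (nat \<Rightarrow> bool) \<Rightarrow> nat \<Rightarrow> ('a \<times> real) list" where
  "par_hist \<epsilon> x0 t SI SII \<omega> 0 = [(x0, t)]"
| "par_hist \<epsilon> x0 t SI SII \<omega> (Suc k) =
     (let h = par_hist \<epsilon> x0 t SI SII \<omega> k
      in h @ [(fst (last h) + (if \<omega> k then \<epsilon> else - \<epsilon>) *\<^sub>R SII h (SI h),
               snd (last h) - \<epsilon>\<^sup>2 / 2)])"

definition par_pos :: "real \<Rightarrow> 'a::euclidean_space \<Rightarrow> real \<Rightarrow> (('a \<times> real) list \<Rightarrow> 'a set) \<Rightarrow>
    (('a \<times> real) list \<Rightarrow> 'a set \<Rightarrow> 'a) \<Rightarrow> (nat \<Rightarrow> bool) \<Rightarrow> nat \<Rightarrow> 'a \<times> real" where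
  "par_pos \<epsilon> x0 t SI SII \<omega> k = last (par_hist \<epsilon> x0 t SI SII \<omega> k)"

text \<open>First step at which x_k leaves the domain or t_k \<le> 0 (finite since eps > 0).\<close>
definition par_tau :: "'a set \<Rightarrow> real \<Rightarrow> 'a::euclidean_space \<Rightarrow> real \<Rightarrow> (('a \<times> real) list \<Rightarrow> 'a set) \<Rightarrow>
    (('a \<times> real) list \<Rightarrow> 'a set \<Rightarrow> 'a) \<Rightarrow> (nat \<Rightarrow> bool) \<Rightarrow> nat" where
  "par_tau \<Omega> \<epsilon> x0 t SI SII \<omega> =
     (LEAST k. fst (par_pos \<epsilon> x0 t SI SII \<omega> k) \<notin> \<Omega> \<or> snd (par_pos \<epsilon> x0 t SI SII \<omega> k) \<le> 0)"

end

theory Submission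
  imports Defs
begin

text \<open>Let \<open>\<Omega> \<subseteq> cball 0 R\<close> with \<open>R \<ge> 1\<close> and weigh positions by
  \<open>w x = exp (- |x|\<^sup>2 / (8 R\<^sup>2))\<close>. Whatever unit direction \<open>v\<close> the players choose at
  \<open>x \<in> \<Omega>\<close>, the average of \<open>w\<close> over the two moves \<open>x \<plusminus> \<epsilon> v\<close> equals
  \<open>w x \<cdot> exp (- \<epsilon>\<^sup>2 / (8 R\<^sup>2)) \<cdot> cosh (\<epsilon> x\<bullet>v / (4 R\<^sup>2))\<close>, which is at most
  \<open>w x \<cdot> exp (- c)\<close> with \<open>c = \<epsilon>\<^sup>2 / (16 R\<^sup>2)\<close> because \<open>cosh y \<le> exp (y\<^sup>2)\<close> for \<open>|y| \<le> 1\<close>.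
  As \<open>w \<ge> exp (- 1/8)\<close> on \<open>\<Omega>\<close>, at most a fraction \<open>exp (1/8 - c n)\<close> of the \<open>2\<^sup>n\<close> coin
  sequences keep the token in \<open>\<Omega>\<close> for \<open>n\<close> steps. Both events of the theorem force the
  token to stay in \<open>\<Omega>\<close> during the \<open>n \<approx> 2 t / \<epsilon>\<^sup>2\<close> steps that end before time \<open>t\<close>, which
  gives the bound with \<open>\<mu> = 1 / (8 R\<^sup>2)\<close> and \<open>C = e\<close>.\<close>

text \<open>Recursion on the first coin, with the rule shifted by the initial state, lets an
  induction on the number of steps peel off the first move.\<close>
fun play_hist :: "('h list \<Rightarrow> bool \<Rightarrow> 'h) \<Rightarrow> 'h \<Rightarrow> bool list \<Rightarrow> 'h list" where
  "play_hist st x0 [] = [x0]"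
| "play_hist st x0 (b # bs) = x0 # play_hist (\<lambda>h. st (x0 # h)) (st [x0] b) bs"

lemma play_hist_not_Nil [simp]: "play_hist st x0 bs \<noteq> []"
  by (cases bs) auto

lemma play_hist_snoc:
  "play_hist st x0 (bs @ [b]) = play_hist st x0 bs @ [st (play_hist st x0 bs) b]"
  by (induction bs arbitrary: st x0) auto

lemma cosh_le_exp_square:
  fixes y :: real
  assumes "\<bar>y\<bar> \<le> 1"
  shows "cosh y \<le> exp (y\<^sup>2)"
proof -
  have exp_plus_exp_minus: "exp z + exp (- z) \<le> 2 + 2 * z\<^sup>2" if "0 \<le> z" "z \<le> 1" for z :: real
  proof -
    have "exp (- z) * (1 + z) \<le> exp (- z) * exp z"
      by (intro mult_left_mono) auto
    moreover have "(1 - z + z\<^sup>2) * (1 + z) \<ge> 1"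
      using that by (simp add: algebra_simps power2_eq_square power3_eq_cube)
    ultimately have "exp (- z) * (1 + z) \<le> (1 - z + z\<^sup>2) * (1 + z)"
      by (simp add: exp_minus)
    hence "exp (- z) \<le> 1 - z + z\<^sup>2"
      using that by (simp add: mult_le_cancel_right_pos)
    with exp_bound[OF that] show ?thesis by simp
  qed
  have "exp y + exp (- y) \<le> 2 + 2 * y\<^sup>2"
    using exp_plus_exp_minus[of y] exp_plus_exp_minus[of "- y"] assms
    by (cases "y \<ge> 0") (auto simp: add.commute)
  also have "\<dots> \<le> 2 * exp (y\<^sup>2)"
    using exp_ge_add_one_self[of "y\<^sup>2"] by linarith
  finally show ?thesis by (simp add: cosh_field_def)
qed

definition gauss_weight :: "real \<Rightarrow> 'a::real_normed_vector \<Rightarrow> real" where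
  "gauss_weight R x = exp (- (norm x)\<^sup>2 / (8 * R\<^sup>2))"

lemma gauss_weight_pos: "0 < gauss_weight R x"
  by (simp add: gauss_weight_def)

lemma gauss_weight_le_1: "gauss_weight R x \<le> 1"
  by (simp add: gauss_weight_def)

lemma gauss_weight_ge_in_ball:
  assumes "norm x \<le> R" "0 < R"
  shows "exp (- (1/8)) \<le> gauss_weight R x"
proof -
  have "(norm x)\<^sup>2 \<le> R\<^sup>2"
    using assms by (simp add: power_mono)
  thus ?thesis
    using assms(2) by (simp add: gauss_weight_def field_simps)
qed

lemma gauss_weight_step_average_le:
  fixes x u :: "'a::real_inner"
  assumes "norm x \<le> R" "norm u = 1" "1 \<le> R" "0 < \<epsilon>" "\<epsilon> \<le> 1"
  shows "(gauss_weight R (x + \<epsilon> *\<^sub>R u) + gauss_weight R (x - \<epsilon> *\<^sub>R u)) / 2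
    \<le> gauss_weight R x * exp (- (\<epsilon>\<^sup>2 / (16 * R\<^sup>2)))"
proof -
  define \<theta> where "\<theta> = 1 / (8 * R\<^sup>2)"
  define y where "y = 2 * \<theta> * \<epsilon> * (x \<bullet> u)"
  have R_pos: "0 < R" using assms(3) by simp
  have weight: "gauss_weight R z = exp (- \<theta> * (norm z)\<^sup>2)" for z :: 'a
    by (simp add: gauss_weight_def \<theta>_def)
  have "u \<bullet> u = 1"
    using assms(2) by (simp flip: power2_norm_eq_inner)
  have norm_shift: "(norm (x + s *\<^sub>R u))\<^sup>2 = (norm x)\<^sup>2 + 2 * s * (x \<bullet> u) + s\<^sup>2" for s
  proof -
    have "(norm (x + s *\<^sub>R u))\<^sup>2 = (x + s *\<^sub>R u) \<bullet> (x + s *\<^sub>R u)"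
      by (rule power2_norm_eq_inner)
    also have "\<dots> = x \<bullet> x + 2 * s * (x \<bullet> u) + s\<^sup>2 * (u \<bullet> u)"
      by (simp add: inner_add_left inner_add_right inner_commute algebra_simps power2_eq_square)
    finally show ?thesis
      using \<open>u \<bullet> u = 1\<close> by (simp add: power2_norm_eq_inner)
  qed
  have "\<bar>x \<bullet> u\<bar> \<le> R"
    using Cauchy_Schwarz_ineq2[of x u] assms(1,2) by simp
  hence y_le: "\<bar>y\<bar> \<le> \<epsilon> / (4 * R)"
    using assms(4) R_pos by (simp add: y_def \<theta>_def abs_mult field_simps power2_eq_square)
  moreover have "\<epsilon> / (4 * R) \<le> 1"
    using assms(3-5) by (simp add: field_simps)
  ultimately have y_le_1: "\<bar>y\<bar> \<le> 1"
    by linarith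
  have "y\<^sup>2 \<le> (\<epsilon> / (4 * R))\<^sup>2"
    using power_mono[OF y_le abs_ge_zero, of 2] by simp
  hence exponent: "- \<theta> * \<epsilon>\<^sup>2 + y\<^sup>2 \<le> - (\<epsilon>\<^sup>2 / (16 * R\<^sup>2))"
    by (simp add: \<theta>_def power_divide field_simps)
  have weight_shift: "gauss_weight R (x + s *\<^sub>R u)
      = gauss_weight R x * exp (- \<theta> * s\<^sup>2) * exp (- (2 * \<theta> * s * (x \<bullet> u)))" for s
    by (simp add: weight norm_shift exp_add[symmetric] algebra_simps)
  have "gauss_weight R (x + \<epsilon> *\<^sub>R u) + gauss_weight R (x - \<epsilon> *\<^sub>R u)
      = 2 * (gauss_weight R x * exp (- \<theta> * \<epsilon>\<^sup>2) * cosh y)"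
    using weight_shift[of \<epsilon>] weight_shift[of "- \<epsilon>"]
    by (simp add: y_def cosh_field_def algebra_simps)
  also have "\<dots> \<le> 2 * (gauss_weight R x * exp (- \<theta> * \<epsilon>\<^sup>2) * exp (y\<^sup>2))"
    using cosh_le_exp_square[OF y_le_1] by (simp add: weight)
  also have "\<dots> \<le> 2 * (gauss_weight R x * exp (- (\<epsilon>\<^sup>2 / (16 * R\<^sup>2))))"
    using exponent by (simp add: weight mult.assoc exp_add[symmetric])
  finally show ?thesis by simp
qed

text \<open>States carry more than a position (the parabolic game also records time); \<open>p\<close>
  projects a state to its position.\<close>
definition unit_step_rule ::
    "('h \<Rightarrow> 'a::real_normed_vector) \<Rightarrow> real \<Rightarrow> ('h list \<Rightarrow> bool \<Rightarrow> 'h) \<Rightarrow> ('h list \<Rightarrow> 'a) \<Rightarrow> bool" where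
  "unit_step_rule p \<epsilon> st u \<longleftrightarrow>
     (\<forall>h b. h \<noteq> [] \<longrightarrow> p (st h b) = p (last h) + (if b then \<epsilon> else - \<epsilon>) *\<^sub>R u h \<and> norm (u h) = 1)"

lemma unit_step_rule_shift:
  "unit_step_rule p \<epsilon> st u \<Longrightarrow> unit_step_rule p \<epsilon> (\<lambda>h. st (x0 # h)) (\<lambda>h. u (x0 # h))"
  unfolding unit_step_rule_def by auto

definition stays_within ::
    "'a set \<Rightarrow> ('h \<Rightarrow> 'a) \<Rightarrow> ('h list \<Rightarrow> bool \<Rightarrow> 'h) \<Rightarrow> 'h \<Rightarrow> nat \<Rightarrow> bool list \<Rightarrow> bool" where
  "stays_within \<Omega> p st x0 n bs \<longleftrightarrow> (\<forall>k\<le>n. p (last (play_hist st x0 (take k bs))) \<in> \<Omega>)"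

lemma stays_within_Suc_Cons:
  "stays_within \<Omega> p st x0 (Suc n) (b # bs) \<longleftrightarrow>
     p x0 \<in> \<Omega> \<and> stays_within \<Omega> p (\<lambda>h. st (x0 # h)) (st [x0] b) n bs"
proof -
  have "(\<forall>k\<le>Suc n. P k) \<longleftrightarrow> P 0 \<and> (\<forall>k\<le>n. P (Suc k))" for P :: "nat \<Rightarrow> bool"
    using All_less_Suc2[of "Suc n" P] by (simp add: less_Suc_eq_le)
  thus ?thesis
    unfolding stays_within_def by simp
qed

lemma sum_bool_lists_Suc:
  "(\<Sum>bs | length bs = Suc n. f bs) =
   (\<Sum>bs | length bs = n. f (True # bs)) + (\<Sum>bs | length bs = n. f (False # bs))"
proof -
  let ?L = "{bs::bool list. length bs = n}"
  have lists_Suc: "{bs. length bs = Suc n} = Cons True ` ?L \<union> Cons False ` ?L"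
    by (auto simp: length_Suc_conv)
  have "(\<Sum>bs | length bs = Suc n. f bs) = (\<Sum>bs\<in>Cons True ` ?L. f bs) + (\<Sum>bs\<in>Cons False ` ?L. f bs)"
    unfolding lists_Suc by (rule sum.union_disjoint) (auto simp: finite_list_length)
  thus ?thesis
    by (simp add: sum.reindex)
qed

text \<open>The expected weight of the final position, restricted to plays that stay in \<open>\<Omega>\<close>,
  decays geometrically; this is the supermartingale property of \<open>e\<^sup>c\<^sup>k w(x\<^sub>k)\<close> in
  counting form.\<close>
lemma surviving_weight_sum_le:
  fixes p :: "'h \<Rightarrow> 'a::real_inner"
  assumes \<Omega>: "\<forall>x\<in>\<Omega>. norm x \<le> R" and "1 \<le> R" "0 < \<epsilon>" "\<epsilon> \<le> 1"
    and "unit_step_rule p \<epsilon> st u"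
  shows "(\<Sum>bs | length bs = n.
            if stays_within \<Omega> p st x0 n bs then gauss_weight R (p (last (play_hist st x0 bs))) else 0)
    \<le> 2 ^ n * exp (- (\<epsilon>\<^sup>2 / (16 * R\<^sup>2)) * real n) * gauss_weight R (p x0)"
  using assms(5)
proof (induction n arbitrary: st u x0)
  case 0
  have "{bs::bool list. length bs = 0} = {[]}" by auto
  thus ?case
    using gauss_weight_pos[of R "p x0"] by (simp only:) (simp add: stays_within_def)
next
  case (Suc n)
  define c where "c = \<epsilon>\<^sup>2 / (16 * R\<^sup>2)"
  define G where "G = (\<lambda>y bs. if stays_within \<Omega> p (\<lambda>h. st (x0 # h)) y n bs
                     then gauss_weight R (p (last (play_hist (\<lambda>h. st (x0 # h)) y bs))) else 0)"
  have IH: "(\<Sum>bs | length bs = n. G y bs) \<le> 2 ^ n * exp (- c * real n) * gauss_weight R (p y)" for y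
    using Suc.IH[OF unit_step_rule_shift[OF Suc.prems, of x0], of y]
    unfolding G_def c_def by simp
  have sum_split: "(\<Sum>bs | length bs = Suc n.
          if stays_within \<Omega> p st x0 (Suc n) bs then gauss_weight R (p (last (play_hist st x0 bs))) else 0)
      = (if p x0 \<in> \<Omega> then (\<Sum>bs | length bs = n. G (st [x0] True) bs)
                          + (\<Sum>bs | length bs = n. G (st [x0] False) bs) else 0)"
    unfolding sum_bool_lists_Suc stays_within_Suc_Cons play_hist.simps(2)
      last_ConsR[OF play_hist_not_Nil]
    by (simp add: G_def)
  show ?case
  proof (cases "p x0 \<in> \<Omega>")
    case True
    have step: "p (st [x0] b) = p x0 + (if b then \<epsilon> else - \<epsilon>) *\<^sub>R u [x0]" "norm (u [x0]) = 1" for b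
      using Suc.prems unfolding unit_step_rule_def by auto
    have "(\<Sum>bs | length bs = n. G (st [x0] True) bs) + (\<Sum>bs | length bs = n. G (st [x0] False) bs)
        \<le> 2 ^ n * exp (- c * real n)
            * (gauss_weight R (p x0 + \<epsilon> *\<^sub>R u [x0]) + gauss_weight R (p x0 - \<epsilon> *\<^sub>R u [x0]))"
      using add_mono[OF IH[of "st [x0] True"] IH[of "st [x0] False"]] by (simp add: step distrib_left)
    also have "\<dots> \<le> 2 ^ n * exp (- c * real n) * (2 * (gauss_weight R (p x0) * exp (- c)))"
      using gauss_weight_step_average_le[OF _ step(2) assms(2-4), of "p x0"] \<Omega> True
      by (intro mult_left_mono) (auto simp: c_def)
    also have "\<dots> = 2 ^ Suc n * exp (- c * real (Suc n)) * gauss_weight R (p x0)"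
      by (simp add: exp_add[symmetric] algebra_simps)
    finally show ?thesis
      using True by (simp add: sum_split c_def)
  next
    case False
    thus ?thesis
      using gauss_weight_pos[of R "p x0"] by (simp add: sum_split)
  qed
qed

lemma card_surviving_lists_le:
  fixes p :: "'h \<Rightarrow> 'a::real_inner"
  assumes \<Omega>: "\<forall>x\<in>\<Omega>. norm x \<le> R" and R: "1 \<le> R" and "0 < \<epsilon>" "\<epsilon> \<le> 1"
    and "unit_step_rule p \<epsilon> st u"
  shows "real (card {bs. length bs = n \<and> stays_within \<Omega> p st x0 n bs})
     \<le> 2 ^ n * exp (- (\<epsilon>\<^sup>2 / (16 * R\<^sup>2)) * real n) * exp (1/8)"
proof -
  define B where "B = {bs::bool list. length bs = n \<and> stays_within \<Omega> p st x0 n bs}"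
  have "real (card B) * exp (- (1/8)) = (\<Sum>bs\<in>B. exp (- (1/8)))"
    by simp
  also have "\<dots> \<le> (\<Sum>bs\<in>B. gauss_weight R (p (last (play_hist st x0 bs))))"
  proof (rule sum_mono)
    fix bs assume "bs \<in> B"
    hence "p (last (play_hist st x0 bs)) \<in> \<Omega>"
      unfolding B_def stays_within_def by auto
    thus "exp (- (1/8)) \<le> gauss_weight R (p (last (play_hist st x0 bs)))"
      using \<Omega> R by (intro gauss_weight_ge_in_ball) auto
  qed
  also have "\<dots> = (\<Sum>bs | length bs = n.
      if stays_within \<Omega> p st x0 n bs then gauss_weight R (p (last (play_hist st x0 bs))) else 0)"
    by (simp add: sum.If_cases finite_list_length B_def Int_def conj_commute)
  also have "\<dots> \<le> 2 ^ n * exp (- (\<epsilon>\<^sup>2 / (16 * R\<^sup>2)) * real n) * gauss_weight R (p x0)"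
    by (rule surviving_weight_sum_le[OF assms])
  also have "\<dots> \<le> 2 ^ n * exp (- (\<epsilon>\<^sup>2 / (16 * R\<^sup>2)) * real n)"
    using gauss_weight_le_1 by (intro mult_left_le) auto
  finally show ?thesis
    unfolding B_def by (simp add: exp_minus field_simps)
qed

lemma prob_space_coin_space: "prob_space coin_space"
  unfolding coin_space_def by (rule prob_space_PiM) (rule prob_space_measure_pmf)

lemma coin_prefix_event:
  assumes "length bs = n"
  shows "{\<omega>. map \<omega> [0..<n] = bs} \<in> sets coin_space"
    and "measure coin_space {\<omega>. map \<omega> [0..<n] = bs} = (1/2) ^ n"
proof -
  let ?M = "\<lambda>_::nat. measure_pmf (bernoulli_pmf (1/2))"
  have cylinder: "{\<omega>. map \<omega> [0..<n] = bs} = prod_emb UNIV ?M {..<n} (\<Pi>\<^sub>E i\<in>{..<n}. {bs ! i})"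
    using assms by (auto simp: prod_emb_def PiE_iff list_eq_iff_nth_eq restrict_def)
  show "{\<omega>. map \<omega> [0..<n] = bs} \<in> sets coin_space"
    unfolding cylinder coin_space_def by (rule sets_PiM_I) auto
  have "emeasure coin_space {\<omega>. map \<omega> [0..<n] = bs} = (\<Prod>i\<in>{..<n}. emeasure (?M i) {bs ! i})"
    unfolding cylinder coin_space_def by (rule emeasure_PiM_emb) (auto intro: prob_space_measure_pmf)
  also have "\<dots> = (\<Prod>i\<in>{..<n}. ennreal (1/2))"
    by (intro prod.cong refl) (simp add: emeasure_pmf_single)
  also have "\<dots> = ennreal (\<Prod>i\<in>{..<n}. 1/2)"
    by (rule prod_ennreal) simp
  finally show "measure coin_space {\<omega>. map \<omega> [0..<n] = bs} = (1/2) ^ n"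
    by (simp add: measure_def)
qed

lemma measure_stays_within_le:
  fixes p :: "'h \<Rightarrow> 'a::real_inner"
  assumes "\<forall>x\<in>\<Omega>. norm x \<le> R" "1 \<le> R" "0 < \<epsilon>" "\<epsilon> \<le> 1"
    and "unit_step_rule p \<epsilon> st u"
    and S: "S \<subseteq> {\<omega>. stays_within \<Omega> p st x0 n (map \<omega> [0..<n])}"
  shows "measure coin_space S \<le> exp (- (\<epsilon>\<^sup>2 / (16 * R\<^sup>2)) * real n) * exp (1/8)"
proof -
  interpret prob_space coin_space by (rule prob_space_coin_space)
  define B where "B = {bs. length bs = n \<and> stays_within \<Omega> p st x0 n bs}"
  define E where "E = (\<Union>bs\<in>B. {\<omega>. map \<omega> [0..<n] = bs})"
  have fin_B: "finite B"
    unfolding B_def by (rule rev_finite_subset[OF finite_list_length[where n = n]]) auto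
  have E_sets: "E \<in> events"
    unfolding E_def by (rule sets.finite_UN[OF fin_B]) (auto simp: B_def coin_prefix_event)
  have "measure coin_space S \<le> measure coin_space E"
    using S E_sets by (intro finite_measure_mono) (auto simp: E_def B_def)
  also have "\<dots> = (\<Sum>bs\<in>B. measure coin_space {\<omega>. map \<omega> [0..<n] = bs})"
    unfolding E_def
    by (rule measure_finite_Union[OF fin_B]) (auto simp: B_def coin_prefix_event disjoint_family_on_def)
  also have "\<dots> = real (card B) * (1/2) ^ n"
    by (simp add: B_def coin_prefix_event)
  also have "\<dots> \<le> 2 ^ n * exp (- (\<epsilon>\<^sup>2 / (16 * R\<^sup>2)) * real n) * exp (1/8) * (1/2) ^ n"
    using card_surviving_lists_le[OF assms(1-5), of n x0]
    by (intro mult_right_mono) (auto simp: B_def)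
  also have "\<dots> = exp (- (\<epsilon>\<^sup>2 / (16 * R\<^sup>2)) * real n) * exp (1/8)"
    by (simp add: power_one_over)
  finally show ?thesis .
qed

lemma exists_steps_before:
  fixes d t :: real
  assumes "0 < d" "0 < t"
  obtains n where "real n * d < t" "t \<le> (real n + 1) * d"
proof
  define q where "q = t / d"
  have "0 < q" using assms by (simp add: q_def)
  hence n: "real (nat (\<lceil>q\<rceil> - 1)) = of_int \<lceil>q\<rceil> - 1"
    by (simp add: of_nat_nat one_le_ceiling)
  have "of_int \<lceil>q\<rceil> - 1 < q" "q \<le> of_int \<lceil>q\<rceil>"
    using ceiling_correct[of q] by auto
  moreover have t: "t = q * d"
    using assms by (simp add: q_def)
  ultimately show "real (nat (\<lceil>q\<rceil> - 1)) * d < t" "t \<le> (real (nat (\<lceil>q\<rceil> - 1)) + 1) * d"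
    unfolding n t using assms by (simp_all add: mult_strict_right_mono mult_right_mono)
qed

lemma survival_bound_le_exp_decay:
  assumes "1 \<le> R" "0 < \<epsilon>" "\<epsilon> \<le> 1" "t \<le> (real n + 1) * (\<epsilon>\<^sup>2 / 2)"
  shows "exp (- (\<epsilon>\<^sup>2 / (16 * R\<^sup>2)) * real n) * exp (1/8) \<le> exp 1 * exp (- (1 / (8 * R\<^sup>2)) * t)"
proof -
  define c where "c = \<epsilon>\<^sup>2 / (16 * R\<^sup>2)"
  have "0 < R\<^sup>2" using assms(1) by simp
  have "c \<le> 1/16"
    using assms(1-3) power_le_one[of \<epsilon> 2] one_le_power[of R 2] by (simp add: c_def field_simps)
  moreover have "t / (8 * R\<^sup>2) \<le> c * real n + c"
    using assms(4) \<open>0 < R\<^sup>2\<close> by (simp add: c_def field_simps)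
  ultimately have "- c * real n + 1/8 \<le> 1 + (- (1 / (8 * R\<^sup>2)) * t)"
    by simp
  thus ?thesis
    by (simp add: c_def exp_add[symmetric])
qed

lemma measure_stays_within_until_le:
  fixes p :: "'h \<Rightarrow> 'a::real_inner"
  assumes "\<forall>x\<in>\<Omega>. norm x \<le> R" "1 \<le> R" "0 < \<epsilon>" "\<epsilon> \<le> 1" "0 < t"
    and "unit_step_rule p \<epsilon> st u"
    and S: "\<And>n. real n * \<epsilon>\<^sup>2 / 2 < t \<Longrightarrow> S \<subseteq> {\<omega>. stays_within \<Omega> p st x0 n (map \<omega> [0..<n])}"
  shows "measure coin_space S \<le> exp 1 * exp (- (1 / (8 * R\<^sup>2)) * t)"
proof -
  obtain n where "real n * (\<epsilon>\<^sup>2 / 2) < t" and t_le: "t \<le> (real n + 1) * (\<epsilon>\<^sup>2 / 2)"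
    using exists_steps_before[of "\<epsilon>\<^sup>2 / 2" t] assms(3,5) by auto
  hence "measure coin_space S \<le> exp (- (\<epsilon>\<^sup>2 / (16 * R\<^sup>2)) * real n) * exp (1/8)"
    using S by (intro measure_stays_within_le[OF assms(1-4,6)]) auto
  also have "\<dots> \<le> exp 1 * exp (- (1 / (8 * R\<^sup>2)) * t)"
    by (rule survival_bound_le_exp_decay[OF assms(2-4) t_le])
  finally show ?thesis .
qed

definition ell_rule :: "real \<Rightarrow> ('a list \<Rightarrow> 'a set) \<Rightarrow> ('a list \<Rightarrow> 'a set \<Rightarrow> 'a) \<Rightarrow>
    'a list \<Rightarrow> bool \<Rightarrow> 'a::euclidean_space" where
  "ell_rule \<epsilon> SI SII = (\<lambda>h b. last h + (if b then \<epsilon> else - \<epsilon>) *\<^sub>R SII h (SI h))"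

definition par_rule :: "real \<Rightarrow> (('a \<times> real) list \<Rightarrow> 'a set) \<Rightarrow> (('a \<times> real) list \<Rightarrow> 'a set \<Rightarrow> 'a) \<Rightarrow>
    ('a \<times> real) list \<Rightarrow> bool \<Rightarrow> 'a::euclidean_space \<times> real" where
  "par_rule \<epsilon> SI SII = (\<lambda>h b. (fst (last h) + (if b then \<epsilon> else - \<epsilon>) *\<^sub>R SII h (SI h),
                                snd (last h) - \<epsilon>\<^sup>2 / 2))"

lemma ell_hist_eq_play_hist:
  "ell_hist \<epsilon> x0 SI SII \<omega> k = play_hist (ell_rule \<epsilon> SI SII) x0 (map \<omega> [0..<k])"
  by (induction k) (auto simp: play_hist_snoc ell_rule_def Let_def)

lemma par_hist_eq_play_hist:
  "par_hist \<epsilon> x0 t SI SII \<omega> k = play_hist (par_rule \<epsilon> SI SII) (x0, t) (map \<omega> [0..<k])"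
  by (induction k) (auto simp: play_hist_snoc par_rule_def Let_def)

lemma snd_par_pos: "snd (par_pos \<epsilon> x0 t SI SII \<omega> k) = t - real k * \<epsilon>\<^sup>2 / 2"
  unfolding par_pos_def
  by (induction k) (auto simp: Let_def add_divide_distrib distrib_right)

lemma unit_step_rule_ell_rule:
  assumes "strategy_I j SI" "strategy_II j SII"
  shows "unit_step_rule (\<lambda>x. x) \<epsilon> (ell_rule \<epsilon> SI SII) (\<lambda>h. SII h (SI h))"
  using assms unfolding unit_step_rule_def ell_rule_def strategy_I_def strategy_II_def by auto

lemma unit_step_rule_par_rule:
  assumes "strategy_I j SI" "strategy_II j SII"
  shows "unit_step_rule fst \<epsilon> (par_rule \<epsilon> SI SII) (\<lambda>h. SII h (SI h))"
  using assms unfolding unit_step_rule_def par_rule_def strategy_I_def strategy_II_def by auto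

lemma par_timeout_event_subset:
  assumes "real n * \<epsilon>\<^sup>2 / 2 < t" "0 < \<epsilon>"
  shows "{\<omega> \<in> space coin_space. snd (par_pos \<epsilon> x0 t SI SII \<omega> (par_tau \<Omega> \<epsilon> x0 t SI SII \<omega>)) \<le> 0}
    \<subseteq> {\<omega>. stays_within \<Omega> fst (par_rule \<epsilon> SI SII) (x0, t) n (map \<omega> [0..<n])}"
  unfolding stays_within_def
proof (intro subsetI CollectI allI impI)
  fix \<omega> k
  assume "\<omega> \<in> {\<omega> \<in> space coin_space.
            snd (par_pos \<epsilon> x0 t SI SII \<omega> (par_tau \<Omega> \<epsilon> x0 t SI SII \<omega>)) \<le> 0}"
    and "k \<le> n"
  have "real n * \<epsilon>\<^sup>2 < real (par_tau \<Omega> \<epsilon> x0 t SI SII \<omega>) * \<epsilon>\<^sup>2"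
    using assms(1) \<open>\<omega> \<in> _\<close> unfolding snd_par_pos by auto
  hence "k < par_tau \<Omega> \<epsilon> x0 t SI SII \<omega>"
    using \<open>k \<le> n\<close> assms(2) by (simp add: mult_less_cancel_right_pos)
  hence "fst (par_pos \<epsilon> x0 t SI SII \<omega> k) \<in> \<Omega>"
    unfolding par_tau_def by (auto dest: not_less_Least)
  thus "fst (last (play_hist (par_rule \<epsilon> SI SII) (x0, t) (take k (map \<omega> [0..<n])))) \<in> \<Omega>"
    using \<open>k \<le> n\<close> by (simp add: par_pos_def par_hist_eq_play_hist take_map)
qed

lemma ell_late_exit_event_subset:
  assumes "real n * \<epsilon>\<^sup>2 / 2 < t"
  shows "{\<omega> \<in> space coin_space. \<forall>m. ell_tau \<Omega> \<epsilon> x0 SI SII \<omega> = enat m \<longrightarrow> t \<le> \<epsilon>\<^sup>2 * real m / 2}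
    \<subseteq> {\<omega>. stays_within \<Omega> (\<lambda>x. x) (ell_rule \<epsilon> SI SII) x0 n (map \<omega> [0..<n])}"
  unfolding stays_within_def
proof (intro subsetI CollectI allI impI)
  fix \<omega> k
  assume late: "\<omega> \<in> {\<omega> \<in> space coin_space.
                  \<forall>m. ell_tau \<Omega> \<epsilon> x0 SI SII \<omega> = enat m \<longrightarrow> t \<le> \<epsilon>\<^sup>2 * real m / 2}"
    and "k \<le> n"
  have "ell_pos \<epsilon> x0 SI SII \<omega> k \<in> \<Omega>"
  proof (rule ccontr)
    assume out: "ell_pos \<epsilon> x0 SI SII \<omega> k \<notin> \<Omega>"
    define m where "m = (LEAST k. ell_pos \<epsilon> x0 SI SII \<omega> k \<notin> \<Omega>)"
    have "ell_tau \<Omega> \<epsilon> x0 SI SII \<omega> = enat m"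
      using out by (auto simp: ell_tau_def m_def)
    hence "t \<le> \<epsilon>\<^sup>2 * real m / 2"
      using late by simp
    moreover have "m \<le> k"
      unfolding m_def using out by (rule Least_le)
    hence "real m * \<epsilon>\<^sup>2 \<le> real n * \<epsilon>\<^sup>2"
      using \<open>k \<le> n\<close> by (intro mult_right_mono) auto
    ultimately show False
      using assms(1) by (simp add: algebra_simps)
  qed
  thus "last (play_hist (ell_rule \<epsilon> SI SII) x0 (take k (map \<omega> [0..<n]))) \<in> \<Omega>"
    using \<open>k \<le> n\<close> by (simp add: ell_pos_def ell_hist_eq_play_hist take_map)
qed

lemma par_timeout_prob_le:
  assumes "\<forall>x\<in>\<Omega>. norm x \<le> R" "1 \<le> R" "0 < \<epsilon>" "\<epsilon> \<le> 1" "0 < t"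
    and "strategy_I j SI" "strategy_II j SII"
  shows "measure coin_space
      {\<omega> \<in> space coin_space. snd (par_pos \<epsilon> x0 t SI SII \<omega> (par_tau \<Omega> \<epsilon> x0 t SI SII \<omega>)) \<le> 0}
    \<le> exp 1 * exp (- (1 / (8 * R\<^sup>2)) * t)"
  by (rule measure_stays_within_until_le[OF assms(1-5) unit_step_rule_par_rule[OF assms(6,7)]
        par_timeout_event_subset[OF _ assms(3)]])

lemma ell_late_exit_prob_le:
  assumes "\<forall>x\<in>\<Omega>. norm x \<le> R" "1 \<le> R" "0 < \<epsilon>" "\<epsilon> \<le> 1" "0 < t"
    and "strategy_I j SI" "strategy_II j SII"
  shows "measure coin_space
      {\<omega> \<in> space coin_space. \<forall>n. ell_tau \<Omega> \<epsilon> x0 SI SII \<omega> = enat n \<longrightarrow> t \<le> \<epsilon>\<^sup>2 * real n / 2}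
    \<le> exp 1 * exp (- (1 / (8 * R\<^sup>2)) * t)"
  by (rule measure_stays_within_until_le[OF assms(1-5) unit_step_rule_ell_rule[OF assms(6,7)]
        ell_late_exit_event_subset])

theorem lemma3p6:
  fixes \<Omega> :: "'a::euclidean_space set" and j :: nat
  assumes "open \<Omega>" "connected \<Omega>" "\<Omega> \<noteq> {}" "bounded \<Omega>"
    and "1 \<le> j" "j \<le> DIM('a)"
  shows "\<exists>\<mu>>0. \<exists>C>0. \<forall>\<epsilon>. 0 < \<epsilon> \<and> \<epsilon> < 1 \<longrightarrow> (\<forall>x0\<in>\<Omega>. \<forall>t>0.
     (\<forall>SI SII. strategy_I j SI \<and> strategy_II j SII \<longrightarrow>
        measure coin_space
          {\<omega> \<in> space coin_space.
             snd (par_pos \<epsilon> x0 t SI SII \<omega> (par_tau \<Omega> \<epsilon> x0 t SI SII \<omega>)) \<le> 0}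
        \<le> C * exp (- \<mu> * t)) \<and>
     (\<forall>SI SII. strategy_I j SI \<and> strategy_II j SII \<longrightarrow>
        measure coin_space
          {\<omega> \<in> space coin_space.
             \<forall>n. ell_tau \<Omega> \<epsilon> x0 SI SII \<omega> = enat n \<longrightarrow> t \<le> \<epsilon>\<^sup>2 * real n / 2}
        \<le> C * exp (- \<mu> * t)))"
proof -
  obtain R where "\<forall>x\<in>\<Omega>. norm x \<le> R" and "1 \<le> R"
    using \<open>bounded \<Omega>\<close> unfolding bounded_iff by (meson linear order_trans)
  moreover have "0 < 1 / (8 * R\<^sup>2)"
    using \<open>1 \<le> R\<close> by simp
  ultimately show ?thesis
    by (intro exI[of _ "1 / (8 * R\<^sup>2)"] conjI exI[of _ "exp 1"] exp_gt_zero allI impI ballI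
        par_timeout_prob_le ell_late_exit_prob_le) auto
qed

end
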